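(* Let $N\ge2$ and $\sigma_1,\dots,\sigma_N>0$. Let $R$ be the $(N-1)\times(N-1)$ tridiagonal matrix with $R_{ii}=1$, $R_{i,i+1}=R_{i+1,i}=-1/2$ (other entries $0$), and $A$ the $(N-1)\times(N-1)$ tridiagonal matrix with $A_{ii}=\sigma_i^2+\sigma_{i+1}^2$, $A_{i,i+1}=A_{i+1,i}=-\sigma_{i+1}^2$ (other entries $0$). Then for $1\le k\le l\le N-1$, $$(R^{-1}AR^{-1})_{kl}=\frac{4(N-k)(N-l)}{N^2}\sum_{p=1}^k\sigma_p^2-\frac{4k(N-l)}{N^2}\sum_{p=k+1}^l\sigma_p^2+\frac{4kl}{N^2}\sum_{p=l+1}^N\sigma_p^2.$$ *)

theory Defs
  imports "Jordan_Normal_Form.Matrix"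
begin

definition mat_inv :: "real mat \<Rightarrow> real mat" where
  "mat_inv A = (THE B. B \<in> carrier_mat (dim_row A) (dim_row A) \<and> inverts_mat A B \<and> inverts_mat B A)"

(* R: (N-1)x(N-1) tridiagonal, R_ii = 1, R_{i,i+1} = R_{i+1,i} = -1/2.
   JNF indices are 0-based: 0-based (i,j) is the paper's (i+1,j+1). *)
definition Rmat :: "nat \<Rightarrow> real mat" where
  "Rmat N = mat (N - 1) (N - 1) (\<lambda>(i, j).
     if i = j then 1 else if i + 1 = j \<or> j + 1 = i then - 1 / 2 else 0)"

(* A: (N-1)x(N-1) tridiagonal with paper entries A_ii = s_i^2 + s_{i+1}^2,
   A_{i,i+1} = A_{i+1,i} = - s_{i+1}^2; sigma is indexed 1..N as in the paper. *)
definition Amat :: "nat \<Rightarrow> (nat \<Rightarrow> real) \<Rightarrow> real mat" where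
  "Amat N \<sigma> = mat (N - 1) (N - 1) (\<lambda>(i, j).
     if i = j then (\<sigma> (i + 1))\<^sup>2 + (\<sigma> (i + 2))\<^sup>2
     else if i + 1 = j \<or> j + 1 = i then - (\<sigma> (max i j + 1))\<^sup>2 else 0)"

end

theory Submission
  imports Defs
begin

(*
  With the N x (N-1) forward difference matrix B and D = diag(sigma_1^2, ..., sigma_N^2) one has
  R = B^T B / 2 and A = B^T D B, so R^-1 A R^-1 = C^T D C with C = B R^-1.  The inverse of R is
  twice the Green's function of the discrete Dirichlet Laplacian, in 1-based indices
  G(i, j) = 2 min(i, j) (N - max(i, j)) / N, and its difference C is piecewise constant in the
  row index: 2 (N - k) / N up to the diagonal and -2 k / N below it.  The entry (k, l) of C^T D C
  is therefore a sum of sigma_p^2 over three blocks of p with constant weights.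
*)

lemma mat_inv_eqI:
  assumes "A * B = 1\<^sub>m n" "B * A = 1\<^sub>m n" "A \<in> carrier_mat n n"
  shows "mat_inv A = B"
  unfolding mat_inv_def
proof (rule the_equality)
  have "B \<in> carrier_mat n n"
    using assms by (metis carrier_matI index_mult_mat(2,3) index_one_mat(2,3))
  with assms show "B \<in> carrier_mat (dim_row A) (dim_row A) \<and> inverts_mat A B \<and> inverts_mat B A"
    by (auto simp: inverts_mat_def)
  fix B' assume "B' \<in> carrier_mat (dim_row A) (dim_row A) \<and> inverts_mat A B' \<and> inverts_mat B' A"
  then have B': "B' \<in> carrier_mat n n" "B' * A = 1\<^sub>m n"
    using assms(3) by (auto simp: inverts_mat_def)
  have "B' = B' * (A * B)" using assms(1) B'(1) by simp
  also have "\<dots> = (B' * A) * B"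
    by (simp only: assoc_mult_mat[OF B'(1) assms(3) \<open>B \<in> carrier_mat n n\<close>])
  also have "\<dots> = B" using B'(2) \<open>B \<in> carrier_mat n n\<close> by simp
  finally show "B' = B" .
qed

lemma symmetric_conj_weighted_gram:
  fixes G B D :: "'a :: comm_semiring_0 mat"
  assumes "G \<in> carrier_mat n n" "B \<in> carrier_mat m n" "D \<in> carrier_mat m m"
    and "transpose_mat G = G"
  shows "G * (transpose_mat B * (D * B)) * G = transpose_mat (B * G) * (D * (B * G))"
proof -
  have "transpose_mat (B * G) = G * transpose_mat B"
    using assms by (simp add: transpose_mult[OF assms(2,1)])
  moreover have "G * (transpose_mat B * (D * B)) * G = G * transpose_mat B * (D * (B * G))"
  proof -
    have Bt: "transpose_mat B \<in> carrier_mat n m" and DB: "D * B \<in> carrier_mat m n"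
      using assms by auto
    have "G * (transpose_mat B * (D * B)) * G = G * (transpose_mat B * (D * B * G))"
      using assoc_mult_mat[OF assms(1) mult_carrier_mat[OF Bt DB] assms(1)]
        assoc_mult_mat[OF Bt DB assms(1)] by simp
    also have "\<dots> = G * transpose_mat B * (D * (B * G))"
      using assoc_mult_mat[OF assms(3,2,1)] assoc_mult_mat[OF assms(1) Bt, of "D * (B * G)" n]
        assms by simp
    finally show ?thesis .
  qed
  ultimately show ?thesis by simp
qed

lemma index_weighted_gram:
  assumes "M \<in> carrier_mat m n" "k < n" "l < n"
  shows "(transpose_mat M * (mat_diag m d * M)) $$ (k, l) = (\<Sum>p<m. M $$ (p, k) * d p * M $$ (p, l))"
  using assms by (auto simp: mat_diag_mult_left scalar_prod_def lessThan_atLeast0 ac_simps intro!: sum.cong)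

definition diff_mat :: "nat \<Rightarrow> real mat" where
  "diff_mat N = mat N (N - 1) (\<lambda>(p, i). if p = i then 1 else if p = i + 1 then - 1 else 0)"

definition green_mat :: "nat \<Rightarrow> real mat" where
  "green_mat N = mat (N - 1) (N - 1) (\<lambda>(i, j).
     2 * (real (min i j) + 1) * (real N - real (max i j) - 1) / real N)"

definition green_diff_mat :: "nat \<Rightarrow> real mat" where
  "green_diff_mat N = mat N (N - 1) (\<lambda>(p, k).
     if p \<le> k then 2 * (real N - real k - 1) / real N else - 2 * (real k + 1) / real N)"

lemma diff_mat_carrier: "diff_mat N \<in> carrier_mat N (N - 1)"
  and green_mat_carrier: "green_mat N \<in> carrier_mat (N - 1) (N - 1)"
  and green_diff_mat_carrier: "green_diff_mat N \<in> carrier_mat N (N - 1)"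
  and Rmat_carrier: "Rmat N \<in> carrier_mat (N - 1) (N - 1)"
  by (simp_all add: diff_mat_def green_mat_def green_diff_mat_def Rmat_def)

lemma dim_diff_mat [simp]: "dim_row (diff_mat N) = N" "dim_col (diff_mat N) = N - 1"
  and dim_green_mat [simp]: "dim_row (green_mat N) = N - 1" "dim_col (green_mat N) = N - 1"
  and dim_green_diff_mat [simp]: "dim_row (green_diff_mat N) = N" "dim_col (green_diff_mat N) = N - 1"
  by (simp_all add: diff_mat_def green_mat_def green_diff_mat_def)

lemma index_diff_mat_mult:
  assumes "M \<in> carrier_mat (N - 1) n" "p < N" "j < n"
  shows "(diff_mat N * M) $$ (p, j) =
    (if p < N - 1 then M $$ (p, j) else 0) - (if 0 < p then M $$ (p - 1, j) else 0)"
proof -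
  have "(diff_mat N * M) $$ (p, j) = (\<Sum>i<N - 1.
      (if i = p then M $$ (i, j) else 0) + (if i = p - 1 then (if 0 < p then - M $$ (i, j) else 0) else 0))"
    using assms by (auto simp: diff_mat_def scalar_prod_def lessThan_atLeast0 intro!: sum.cong)
  also have "\<dots> = (if p < N - 1 then M $$ (p, j) else 0) - (if 0 < p then M $$ (p - 1, j) else 0)"
    using assms by (simp only: sum.distrib sum.delta') auto
  finally show ?thesis .
qed

lemma index_transpose_diff_mat_mult:
  assumes "M \<in> carrier_mat N n" "i < N - 1" "j < n"
  shows "(transpose_mat (diff_mat N) * M) $$ (i, j) = M $$ (i, j) - M $$ (i + 1, j)"
proof -
  have "(transpose_mat (diff_mat N) * M) $$ (i, j) = (\<Sum>p<N.
      (if p = i then M $$ (p, j) else 0) - (if p = i + 1 then M $$ (p, j) else 0))"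
    using assms by (auto simp: diff_mat_def scalar_prod_def lessThan_atLeast0 intro!: sum.cong)
  also have "\<dots> = M $$ (i, j) - M $$ (i + 1, j)"
    using assms by (simp only: sum_subtractf sum.delta') auto
  finally show ?thesis .
qed

lemma Rmat_eq_half_gram: "Rmat N = (1 / 2) \<cdot>\<^sub>m (transpose_mat (diff_mat N) * diff_mat N)"
proof (rule eq_matI)
  fix i j assume "i < dim_row ((1 / 2) \<cdot>\<^sub>m (transpose_mat (diff_mat N) * diff_mat N))"
    "j < dim_col ((1 / 2) \<cdot>\<^sub>m (transpose_mat (diff_mat N) * diff_mat N))"
  then have ij: "i < N - 1" "j < N - 1" by simp_all
  have "((1 / 2) \<cdot>\<^sub>m (transpose_mat (diff_mat N) * diff_mat N)) $$ (i, j)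
      = (diff_mat N $$ (i, j) - diff_mat N $$ (i + 1, j)) / 2"
    using ij by (simp add: index_transpose_diff_mat_mult[OF diff_mat_carrier ij])
  also have "\<dots> = Rmat N $$ (i, j)"
    using ij by (auto simp: diff_mat_def Rmat_def)
  finally show "Rmat N $$ (i, j) = ((1 / 2) \<cdot>\<^sub>m (transpose_mat (diff_mat N) * diff_mat N)) $$ (i, j)" ..
qed (simp_all add: Rmat_def)

lemma Amat_eq_weighted_gram:
  "Amat N \<sigma> = transpose_mat (diff_mat N) * (mat_diag N (\<lambda>p. (\<sigma> (p + 1))\<^sup>2) * diff_mat N)"
  (is "_ = transpose_mat (diff_mat N) * ?DB")
proof (rule eq_matI)
  fix i j assume "i < dim_row (transpose_mat (diff_mat N) * ?DB)" "j < dim_col (transpose_mat (diff_mat N) * ?DB)"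
  then have ij: "i < N - 1" "j < N - 1" by simp_all
  have DB: "?DB = mat N (N - 1) (\<lambda>(p, j). (\<sigma> (p + 1))\<^sup>2 * diff_mat N $$ (p, j))"
    by (rule mat_diag_mult_left[OF diff_mat_carrier])
  have "(transpose_mat (diff_mat N) * ?DB) $$ (i, j) = ?DB $$ (i, j) - ?DB $$ (i + 1, j)"
    by (rule index_transpose_diff_mat_mult[OF mult_carrier_mat[OF mat_diag_dim diff_mat_carrier] ij])
  also have "\<dots> = Amat N \<sigma> $$ (i, j)"
    using ij unfolding DB by (auto simp: Amat_def diff_mat_def max_def)
  finally show "Amat N \<sigma> $$ (i, j) = (transpose_mat (diff_mat N) * ?DB) $$ (i, j)" ..
qed (simp_all add: Amat_def)

lemma diff_green_mat:
  assumes "N \<ge> 2"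
  shows "diff_mat N * green_mat N = green_diff_mat N"
proof (rule eq_matI)
  fix p k assume "p < dim_row (green_diff_mat N)" "k < dim_col (green_diff_mat N)"
  then have pk: "p < N" "k < N - 1" by simp_all
  define g where "g i = 2 * (real (min i k) + 1) * (real N - real (max i k) - 1) / real N" for i
  have green: "i < N - 1 \<Longrightarrow> green_mat N $$ (i, k) = g i" for i
    using pk by (simp add: green_mat_def g_def)
  \<comment> \<open>the Dirichlet boundary value g (N - 1) = 0 accounts for the missing last term\<close>
  have "g p = 0" if "\<not> p < N - 1"
  proof -
    have "p = N - 1" using that pk by linarith
    with assms pk show ?thesis by (simp add: g_def max_def)
  qed
  then have "(diff_mat N * green_mat N) $$ (p, k) = g p - (if 0 < p then g (p - 1) else 0)"
    using pk by (auto simp: index_diff_mat_mult[OF green_mat_carrier pk] green)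
  also have "\<dots> = green_diff_mat N $$ (p, k)"
  proof -
    have "real N > 0" using assms by simp
    moreover consider "p = 0" | q where "p = Suc q" "q < k" | q where "p = Suc q" "k \<le> q"
      by (metis not_less not0_implies_Suc)
    ultimately show ?thesis
      using pk by cases (auto simp: g_def green_diff_mat_def field_simps)
  qed
  finally show "(diff_mat N * green_mat N) $$ (p, k) = green_diff_mat N $$ (p, k)" .
qed simp_all

lemma transpose_diff_green_diff_mat:
  assumes "N \<ge> 2"
  shows "transpose_mat (diff_mat N) * green_diff_mat N = 2 \<cdot>\<^sub>m 1\<^sub>m (N - 1)"
proof (rule eq_matI)
  fix i k assume "i < dim_row (2 \<cdot>\<^sub>m 1\<^sub>m (N - 1) :: real mat)" "k < dim_col (2 \<cdot>\<^sub>m 1\<^sub>m (N - 1) :: real mat)"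
  then have ik: "i < N - 1" "k < N - 1" by simp_all
  have "real N > 0" using assms by simp
  with ik show "(transpose_mat (diff_mat N) * green_diff_mat N) $$ (i, k) = (2 \<cdot>\<^sub>m 1\<^sub>m (N - 1)) $$ (i, k)"
    by (simp only: index_transpose_diff_mat_mult[OF green_diff_mat_carrier ik])
      (auto simp: green_diff_mat_def field_simps)
qed simp_all

lemma transpose_green_mat [simp]: "transpose_mat (green_mat N) = green_mat N"
  by (rule eq_matI) (auto simp: green_mat_def min.commute max.commute)

lemma transpose_Rmat [simp]: "transpose_mat (Rmat N) = Rmat N"
  by (rule eq_matI) (auto simp: Rmat_def)

lemma Rmat_green_mat:
  assumes "N \<ge> 2"
  shows "Rmat N * green_mat N = 1\<^sub>m (N - 1)"
proof -
  let ?B = "diff_mat N"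
  have carriers: "?B \<in> carrier_mat N (N - 1)" "transpose_mat ?B \<in> carrier_mat (N - 1) N"
    "green_mat N \<in> carrier_mat (N - 1) (N - 1)"
    by (simp_all only: diff_mat_carrier green_mat_carrier transpose_carrier_mat)
  have "Rmat N * green_mat N = (1 / 2) \<cdot>\<^sub>m (transpose_mat ?B * ?B * green_mat N)"
    unfolding Rmat_eq_half_gram
    by (rule mult_smult_assoc_mat[OF mult_carrier_mat[OF carriers(2,1)] carriers(3)])
  also have "\<dots> = (1 / 2) \<cdot>\<^sub>m (transpose_mat ?B * (?B * green_mat N))"
    by (rule arg_cong[OF assoc_mult_mat[OF carriers(2,1,3)]])
  also have "\<dots> = (1 / 2) \<cdot>\<^sub>m (2 \<cdot>\<^sub>m 1\<^sub>m (N - 1))"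
    using assms by (simp add: diff_green_mat transpose_diff_green_diff_mat)
  also have "\<dots> = 1\<^sub>m (N - 1)"
    by (rule eq_matI) auto
  finally show ?thesis .
qed

lemma green_mat_Rmat:
  assumes "N \<ge> 2"
  shows "green_mat N * Rmat N = 1\<^sub>m (N - 1)"
proof -
  have "green_mat N * Rmat N = transpose_mat (Rmat N * green_mat N)"
    by (simp add: transpose_mult[OF Rmat_carrier green_mat_carrier])
  with Rmat_green_mat[OF assms] show ?thesis by simp
qed

lemma mat_inv_Rmat:
  assumes "N \<ge> 2"
  shows "mat_inv (Rmat N) = green_mat N"
  using Rmat_green_mat[OF assms] green_mat_Rmat[OF assms] by (rule mat_inv_eqI[OF _ _ Rmat_carrier])

lemma sum_green_diff_weighted:
  assumes N: "N \<ge> 2" and kl: "1 \<le> k" "k \<le> l" "l \<le> N - 1"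
  shows "(\<Sum>p<N. green_diff_mat N $$ (p, k - 1) * (\<sigma> (p + 1))\<^sup>2 * green_diff_mat N $$ (p, l - 1)) =
      4 * (real N - real k) * (real N - real l) / (real N)\<^sup>2 * (\<Sum>p = 1..k. (\<sigma> p)\<^sup>2)
    - 4 * real k * (real N - real l) / (real N)\<^sup>2 * (\<Sum>p = k + 1..l. (\<sigma> p)\<^sup>2)
    + 4 * real k * real l / (real N)\<^sup>2 * (\<Sum>p = l + 1..N. (\<sigma> p)\<^sup>2)"
proof -
  let ?C = "green_diff_mat N"
  let ?f = "\<lambda>p. ?C $$ (p, k - 1) * (\<sigma> (p + 1))\<^sup>2 * ?C $$ (p, l - 1)"
  have shift: "(\<Sum>p = a..<b. (\<sigma> (p + 1))\<^sup>2) = (\<Sum>p = a + 1..b. (\<sigma> p)\<^sup>2)" for a b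
    using sum.shift_bounds_Suc_ivl[of "\<lambda>p. (\<sigma> p)\<^sup>2" a b]
    by (simp add: atLeastLessThanSuc_atLeastAtMost)
  have rk: "real (k - 1) = real k - 1" and rl: "real (l - 1) = real l - 1"
    using kl by auto
  have "(\<Sum>p<N. ?f p) = (\<Sum>p = 0..<k. ?f p) + (\<Sum>p = k..<l. ?f p) + (\<Sum>p = l..<N. ?f p)"
    using kl by (simp add: lessThan_atLeast0 sum.atLeastLessThan_concat)
  also have "(\<Sum>p = 0..<k. ?f p) =
      (\<Sum>p = 0..<k. 4 * (real N - real k) * (real N - real l) / (real N)\<^sup>2 * (\<sigma> (p + 1))\<^sup>2)"
    using kl N by (intro sum.cong) (auto simp: green_diff_mat_def rk rl power2_eq_square field_simps)
  also have "(\<Sum>p = k..<l. ?f p) =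
      (\<Sum>p = k..<l. - (4 * real k * (real N - real l) / (real N)\<^sup>2) * (\<sigma> (p + 1))\<^sup>2)"
    using kl by (intro sum.cong) (auto simp: green_diff_mat_def rk rl power2_eq_square)
  also have "(\<Sum>p = l..<N. ?f p) = (\<Sum>p = l..<N. 4 * real k * real l / (real N)\<^sup>2 * (\<sigma> (p + 1))\<^sup>2)"
    using kl by (intro sum.cong) (auto simp: green_diff_mat_def rk rl power2_eq_square)
  finally show ?thesis
    by (simp only: sum_distrib_left[symmetric] shift) simp
qed

theorem lemma4p5:
  fixes N :: nat and \<sigma> :: "nat \<Rightarrow> real" and k l :: nat
  assumes "N \<ge> 2"
    and "\<And>p. 1 \<le> p \<Longrightarrow> p \<le> N \<Longrightarrow> \<sigma> p > 0"
    and "1 \<le> k" and "k \<le> l" and "l \<le> N - 1"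
  shows "(mat_inv (Rmat N) * Amat N \<sigma> * mat_inv (Rmat N)) $$ (k - 1, l - 1) =
      4 * (real N - real k) * (real N - real l) / (real N)\<^sup>2 * (\<Sum>p = 1..k. (\<sigma> p)\<^sup>2)
    - 4 * real k * (real N - real l) / (real N)\<^sup>2 * (\<Sum>p = k + 1..l. (\<sigma> p)\<^sup>2)
    + 4 * real k * real l / (real N)\<^sup>2 * (\<Sum>p = l + 1..N. (\<sigma> p)\<^sup>2)"
proof -
  let ?D = "mat_diag N (\<lambda>p. (\<sigma> (p + 1))\<^sup>2)" and ?C = "green_diff_mat N"
  have "mat_inv (Rmat N) * Amat N \<sigma> * mat_inv (Rmat N) =
      transpose_mat (diff_mat N * green_mat N) * (?D * (diff_mat N * green_mat N))"
    unfolding mat_inv_Rmat[OF assms(1)] Amat_eq_weighted_gram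
    by (rule symmetric_conj_weighted_gram[OF green_mat_carrier diff_mat_carrier mat_diag_dim
          transpose_green_mat])
  also have "\<dots> = transpose_mat ?C * (?D * ?C)"
    by (simp only: diff_green_mat[OF assms(1)])
  finally have "(mat_inv (Rmat N) * Amat N \<sigma> * mat_inv (Rmat N)) $$ (k - 1, l - 1)
      = (\<Sum>p<N. ?C $$ (p, k - 1) * (\<sigma> (p + 1))\<^sup>2 * ?C $$ (p, l - 1))"
    using assms(3-5) by (simp only: index_weighted_gram[OF green_diff_mat_carrier])
  then show ?thesis
    using sum_green_diff_weighted[OF assms(1,3-5)] by simp
qed

end
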